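(* Let $T^-,T'^-\in\Omega^-$, $T^+,T'^+\in\Omega^+$, and let $X$ be a predicate variable or predicate symbol. (1) If $X$ is positive (resp. negative) in $T^-$, then $T^-[T'^-/X]\in\Omega^-$ (resp. $T^-[T'^+/X]\in\Omega^-$). (2) If $X$ is positive (resp. negative) in $T^+$, then $T^+[T'^+/X]\in\Omega^+$ (resp. $T^+[T'^-/X]\in\Omega^+$). (3) For any types $T,F$: if $T[F/X]\in\Omega^+$ (resp. $T[F/X]\in\Omega^-$), then $T\in\Omega^+$ (resp. $T\in\Omega^-$).
   Context: $TTR$ types: over a second-order language with first-order variables, function symbols, $n$-ary predicate variables and symbols; atomic $\perp$ and $X(t_1,\dots,t_n)$; constructors $\to$, $\forall x$, $\forall X$, and $\mu Cx_1\dots x_nA\langle t_1,\dots,t_n\rangle$ for $C$ an $n$-ary predicate symbol occurring and positive in $A$. Positivity: $X$ is positive and negative in $A$ if it does not occur in $A$; positive and not negative in $X(\bar t)$; positive (negative) in $B\to C$ iff negative (positive) in $B$ and positive (negative) in $C$; for $v\ne X$ positive (negative) in $\forall vB$ iff in $B$; positive (negative) in $\mu C\bar xB\langle\bar t\rangle$ iff in $B$. $T[F/X]$ denotes $T[F/X(x_1,\dots,x_n)]$: each atomic $X(t_1,\dots,t_n)$ is replaced by $F[t_1/x_1,\dots,t_n/x_n]$. $\Omega^+$ ($\forall$-positive) and $\Omega^-$ ($\forall$-negative): atomic types are in both; if $T^+\in\Omega^+$, $T^-\in\Omega^-$ then $T^-\to T^+\in\Omega^+$ and $T^+\to T^-\in\Omega^-$;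 if $T^+\in\Omega^+$ then $\forall xT^+,\forall XT^+\in\Omega^+$; if $T^-\in\Omega^-$ then $\forall xT^-\in\Omega^-$, and $\forall XT^-\in\Omega^-$ when $X$ is not free in $T^-$; if $T^+\in\Omega^+$ and $C$ is an $n$-ary predicate symbol occurring and positive in $T^+$ then $\mu Cx_1\dots x_nT^+\langle t_1,\dots,t_n\rangle\in\Omega^+$. *)

theory Defs
  imports Main
begin

text \<open>Syntax of TTR types in de Bruijn representation (all binders are nameless,
so substitution is automatically capture-avoiding).
  Predicates: predicate variables (PV i) and predicate symbols (PS i); both are
  de Bruijn indices in their own namespace (\<forall>X binds PV 0, \<mu>C binds PS 0);
  free predicate variables / symbols are the indices pointing outside all binders.\<close>

datatype trm = TV nat | TF nat "trm list"

datatype prd = PV nat | PS nat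

datatype ty =
    Bot
  | At prd "trm list"
  | Imp ty ty
  | AllI ty                    \<comment> \<open>\<forall>x A  (binds first-order index 0)\<close>
  | AllP ty                    \<comment> \<open>\<forall>X A  (binds predicate-variable index 0)\<close>
  | Mu ty "trm list"           \<comment> \<open>\<mu>C x1..xn A<t1..tn>, n = length of the term list;
                                   binds predicate-symbol index 0 and first-order indices 0..n-1\<close>

fun tsubst :: "(nat \<Rightarrow> trm) \<Rightarrow> trm \<Rightarrow> trm" where
  "tsubst \<sigma> (TV i) = \<sigma> i"
| "tsubst \<sigma> (TF f ts) = TF f (map (tsubst \<sigma>) ts)"

definition liftt :: "trm \<Rightarrow> trm" where
  "liftt = tsubst (\<lambda>i. TV (Suc i))"

definition upt_s :: "(nat \<Rightarrow> trm) \<Rightarrow> nat \<Rightarrow> trm" where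
  "upt_s \<sigma> = (\<lambda>i. case i of 0 \<Rightarrow> TV 0 | Suc j \<Rightarrow> liftt (\<sigma> j))"

definition liftr :: "(nat \<Rightarrow> nat) \<Rightarrow> nat \<Rightarrow> nat" where
  "liftr f = (\<lambda>i. case i of 0 \<Rightarrow> 0 | Suc j \<Rightarrow> Suc (f j))"

fun ty_tsubst :: "(nat \<Rightarrow> trm) \<Rightarrow> ty \<Rightarrow> ty" where
  "ty_tsubst \<sigma> Bot = Bot"
| "ty_tsubst \<sigma> (At p ts) = At p (map (tsubst \<sigma>) ts)"
| "ty_tsubst \<sigma> (Imp A B) = Imp (ty_tsubst \<sigma> A) (ty_tsubst \<sigma> B)"
| "ty_tsubst \<sigma> (AllI A) = AllI (ty_tsubst (upt_s \<sigma>) A)"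
| "ty_tsubst \<sigma> (AllP A) = AllP (ty_tsubst \<sigma> A)"
| "ty_tsubst \<sigma> (Mu A ts) = Mu (ty_tsubst ((upt_s ^^ length ts) \<sigma>) A) (map (tsubst \<sigma>) ts)"

fun ty_pren :: "(nat \<Rightarrow> nat) \<Rightarrow> (nat \<Rightarrow> nat) \<Rightarrow> ty \<Rightarrow> ty" where
  "ty_pren fv fs Bot = Bot"
| "ty_pren fv fs (At (PV i) ts) = At (PV (fv i)) ts"
| "ty_pren fv fs (At (PS i) ts) = At (PS (fs i)) ts"
| "ty_pren fv fs (Imp A B) = Imp (ty_pren fv fs A) (ty_pren fv fs B)"
| "ty_pren fv fs (AllI A) = AllI (ty_pren fv fs A)"
| "ty_pren fv fs (AllP A) = AllP (ty_pren (liftr fv) fs A)"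
| "ty_pren fv fs (Mu A ts) = Mu (ty_pren fv (liftr fs) A) ts"

text \<open>Shifting a predicate past a \<forall>X binder / a \<mu>C binder.\<close>
fun shP :: "prd \<Rightarrow> prd" where
  "shP (PV i) = PV (Suc i)" | "shP (PS i) = PS i"
fun shS :: "prd \<Rightarrow> prd" where
  "shS (PV i) = PV i" | "shS (PS i) = PS (Suc i)"

text \<open>Substitution T[F/X(x1,...,xn)]: every atom X(t1,...,tm) of T is replaced by
  F[t1/x1,...] (simultaneous substitution, free variables of F other than the
  x_i are left unchanged). k, a, b count the first-order, predicate-variable and
  predicate-symbol binders of T crossed so far.\<close>
fun psub :: "nat \<Rightarrow> nat \<Rightarrow> nat \<Rightarrow> prd \<Rightarrow> nat list \<Rightarrow> ty \<Rightarrow> ty \<Rightarrow> ty" where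
  "psub k a b X xs F Bot = Bot"
| "psub k a b X xs F (At p ts) =
     (if p = (shP ^^ a) ((shS ^^ b) X)
      then ty_tsubst (\<lambda>j. case map_of (zip xs ts) j of Some t \<Rightarrow> t | None \<Rightarrow> TV (j + k))
                     (ty_pren (\<lambda>i. i + a) (\<lambda>i. i + b) F)
      else At p ts)"
| "psub k a b X xs F (Imp A B) = Imp (psub k a b X xs F A) (psub k a b X xs F B)"
| "psub k a b X xs F (AllI A) = AllI (psub (Suc k) a b X xs F A)"
| "psub k a b X xs F (AllP A) = AllP (psub k (Suc a) b X xs F A)"
| "psub k a b X xs F (Mu A ts) = Mu (psub (k + length ts) a (Suc b) X xs F A) ts"

definition psubst :: "prd \<Rightarrow> nat list \<Rightarrow> ty \<Rightarrow> ty \<Rightarrow> ty" where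
  "psubst X xs F T = psub 0 0 0 X xs F T"

fun occ :: "prd \<Rightarrow> ty \<Rightarrow> bool" where
  "occ X Bot = False"
| "occ X (At p ts) = (p = X)"
| "occ X (Imp A B) = (occ X A \<or> occ X B)"
| "occ X (AllI A) = occ X A"
| "occ X (AllP A) = occ (shP X) A"
| "occ X (Mu A ts) = occ (shS X) A"

fun pos :: "prd \<Rightarrow> ty \<Rightarrow> bool" and neg :: "prd \<Rightarrow> ty \<Rightarrow> bool" where
  "pos X Bot = True"
| "neg X Bot = True"
| "pos X (At p ts) = True"
| "neg X (At p ts) = (p \<noteq> X)"
| "pos X (Imp A B) = (neg X A \<and> pos X B)"
| "neg X (Imp A B) = (pos X A \<and> neg X B)"
| "pos X (AllI A) = pos X A"
| "neg X (AllI A) = neg X A"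
| "pos X (AllP A) = pos (shP X) A"
| "neg X (AllP A) = neg (shP X) A"
| "pos X (Mu A ts) = pos (shS X) A"
| "neg X (Mu A ts) = neg (shS X) A"

fun is_type :: "ty \<Rightarrow> bool" where
  "is_type Bot = True"
| "is_type (At p ts) = True"
| "is_type (Imp A B) = (is_type A \<and> is_type B)"
| "is_type (AllI A) = is_type A"
| "is_type (AllP A) = is_type A"
| "is_type (Mu A ts) = (is_type A \<and> occ (PS 0) A \<and> pos (PS 0) A)"

inductive OmegaP :: "ty \<Rightarrow> bool" and OmegaN :: "ty \<Rightarrow> bool" where
  P_Bot: "OmegaP Bot"
| P_At: "OmegaP (At p ts)"
| N_Bot: "OmegaN Bot"
| N_At: "OmegaN (At p ts)"
| P_Imp: "OmegaN A \<Longrightarrow> OmegaP B \<Longrightarrow> OmegaP (Imp A B)"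
| N_Imp: "OmegaP A \<Longrightarrow> OmegaN B \<Longrightarrow> OmegaN (Imp A B)"
| P_AllI: "OmegaP A \<Longrightarrow> OmegaP (AllI A)"
| P_AllP: "OmegaP A \<Longrightarrow> OmegaP (AllP A)"
| N_AllI: "OmegaN A \<Longrightarrow> OmegaN (AllI A)"
| N_AllP: "OmegaN A \<Longrightarrow> \<not> occ (PV 0) A \<Longrightarrow> OmegaN (AllP A)"
| P_Mu: "OmegaP A \<Longrightarrow> occ (PS 0) A \<Longrightarrow> pos (PS 0) A \<Longrightarrow> OmegaP (Mu A ts)"

end

theory Submission
  imports Defs
begin

text \<open>Parts (1) and (2) follow by a simultaneous induction on the derivations of
  \<open>T \<in> \<Omega>\<^sup>+\<close> and \<open>T \<in> \<Omega>\<^sup>-\<close>, generalised over the binders crossed so far.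
  An atom \<open>X(t\<^sub>1,\<dots>,t\<^sub>n)\<close> is replaced by a shifted copy of \<open>F\<close> with terms substituted,
  and both operations preserve \<open>\<Omega>\<^sup>\<plusminus>\<close>. The side conditions of the \<open>\<forall>X\<close> and \<open>\<mu>C\<close>
  clauses survive because the shifted copy of \<open>F\<close> never mentions the predicate bound
  by an enclosing binder, while substitution keeps every occurrence of a predicate other
  than \<open>X\<close>. Part (3) holds because atoms lie in both classes, so every constraint imposed
  on \<open>T[F/X]\<close> by the rules is already a constraint on \<open>T\<close>; the \<open>\<mu>\<close>-side conditions
  on \<open>T\<close> come from \<open>T\<close> being a type.\<close>

fun ren :: "(nat \<Rightarrow> nat) \<Rightarrow> (nat \<Rightarrow> nat) \<Rightarrow> prd \<Rightarrow> prd" where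
  "ren fv fs (PV i) = PV (fv i)" | "ren fv fs (PS i) = PS (fs i)"

lemma shP_inj [simp]: "shP Y = shP Z \<longleftrightarrow> Y = Z"
  by (cases Y; cases Z) auto

lemma shS_inj [simp]: "shS Y = shS Z \<longleftrightarrow> Y = Z"
  by (cases Y; cases Z) auto

lemma shP_neq_PV0 [simp]: "shP Z \<noteq> PV 0" "PV 0 \<noteq> shP Z"
  by (cases Z; simp)+

lemma shS_neq_PS0 [simp]: "shS Z \<noteq> PS 0" "PS 0 \<noteq> shS Z"
  by (cases Z; simp)+

lemma prd_cases_shP: obtains "Z = PV 0" | Y where "Z = shP Y"
  by (metis nat.exhaust prd.exhaust shP.simps)

lemma prd_cases_shS: obtains "Z = PS 0" | Y where "Z = shS Y"
  by (metis nat.exhaust prd.exhaust shS.simps)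

lemma liftr_simps [simp]: "liftr f 0 = 0" "liftr f (Suc i) = Suc (f i)"
  by (simp_all add: liftr_def)

lemma ren_liftr_shP [simp]: "ren (liftr fv) fs (shP Z) = shP (ren fv fs Z)"
  by (cases Z) simp_all

lemma ren_liftr_shS [simp]: "ren fv (liftr fs) (shS Z) = shS (ren fv fs Z)"
  by (cases Z) simp_all

lemma shP_eq_ren_liftr:
  "shP Z = ren (liftr fv) fs Z' \<longleftrightarrow> (\<exists>Y. Z' = shP Y \<and> Z = ren fv fs Y)"
  by (cases Z' rule: prd_cases_shP) auto

lemma shS_eq_ren_liftr:
  "shS Z = ren fv (liftr fs) Z' \<longleftrightarrow> (\<exists>Y. Z' = shS Y \<and> Z = ren fv fs Y)"
  by (cases Z' rule: prd_cases_shS) auto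

lemma ren_liftr_eq_PV0 [simp]:
  "ren (liftr fv) fs Y = PV 0 \<longleftrightarrow> Y = PV 0" "PV 0 = ren (liftr fv) fs Y \<longleftrightarrow> Y = PV 0"
  by (cases Y rule: prd_cases_shP; auto)+

lemma ren_liftr_eq_PS0 [simp]:
  "ren fv (liftr fs) Y = PS 0 \<longleftrightarrow> Y = PS 0" "PS 0 = ren fv (liftr fs) Y \<longleftrightarrow> Y = PS 0"
  by (cases Y rule: prd_cases_shS; auto)+

lemma ren_Suc_neq_0 [simp]:
  "PV 0 \<noteq> ren (\<lambda>i. Suc (fv i)) fs Y" "PS 0 \<noteq> ren fv (\<lambda>i. Suc (fs i)) Y"
  by (cases Y; simp)+

lemma occ_ty_pren: "occ Z (ty_pren fv fs G) \<longleftrightarrow> (\<exists>Y. occ Y G \<and> Z = ren fv fs Y)"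
  by (induction fv fs G arbitrary: Z rule: ty_pren.induct)
     (auto simp: shP_eq_ren_liftr shS_eq_ren_liftr)

lemma pos_neg_ty_pren:
  "((\<forall>Y. Z = ren fv fs Y \<longrightarrow> pos Y G) \<longrightarrow> pos Z (ty_pren fv fs G)) \<and>
   ((\<forall>Y. Z = ren fv fs Y \<longrightarrow> neg Y G) \<longrightarrow> neg Z (ty_pren fv fs G))"
proof (induction fv fs G arbitrary: Z rule: ty_pren.induct)
  case (6 fv fs A)
  show ?case using "6.IH"[of "shP Z"] by (auto simp: shP_eq_ren_liftr)
next
  case (7 fv fs A ts)
  show ?case using "7.IH"[of "shS Z"] by (auto simp: shS_eq_ren_liftr)
qed (auto dest: spec[where x="PV _"] spec[where x="PS _"])

lemma occ_shP_ty_pren_Suc: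
  "occ (shP Z) (ty_pren (\<lambda>i. Suc (fv i)) fs G) \<longleftrightarrow> occ Z (ty_pren fv fs G)"
proof -
  have "shP Z = ren (\<lambda>i. Suc (fv i)) fs Y \<longleftrightarrow> Z = ren fv fs Y" for Y
    by (cases Y; cases Z) auto
  then show ?thesis by (simp add: occ_ty_pren)
qed

lemma occ_shS_ty_pren_Suc:
  "occ (shS Z) (ty_pren fv (\<lambda>i. Suc (fs i)) G) \<longleftrightarrow> occ Z (ty_pren fv fs G)"
proof -
  have "shS Z = ren fv (\<lambda>i. Suc (fs i)) Y \<longleftrightarrow> Z = ren fv fs Y" for Y
    by (cases Y; cases Z) auto
  then show ?thesis by (simp add: occ_ty_pren)
qed

lemma pos_neg_if_not_occ: "\<not> occ Z G \<Longrightarrow> pos Z G \<and> neg Z G"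
  by (induction G arbitrary: Z) auto

lemma occ_ty_tsubst [simp]: "occ Z (ty_tsubst \<sigma> G) = occ Z G"
  by (induction G arbitrary: \<sigma> Z) simp_all

lemma pos_neg_ty_tsubst [simp]:
  "pos Z (ty_tsubst \<sigma> G) = pos Z G" "neg Z (ty_tsubst \<sigma> G) = neg Z G"
  by (induction G arbitrary: \<sigma> Z) simp_all

lemma OmegaP_OmegaN_ty_tsubst:
  "OmegaP T \<Longrightarrow> OmegaP (ty_tsubst \<sigma> T)" "OmegaN T \<Longrightarrow> OmegaN (ty_tsubst \<sigma> T)"
  by (induction arbitrary: \<sigma> and \<sigma> rule: OmegaP_OmegaN.inducts)
     (auto intro: OmegaP_OmegaN.intros)

lemma OmegaP_OmegaN_ty_pren:
  "OmegaP T \<Longrightarrow> OmegaP (ty_pren fv fs T)" "OmegaN T \<Longrightarrow> OmegaN (ty_pren fv fs T)"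
proof (induction arbitrary: fv fs and fv fs rule: OmegaP_OmegaN.inducts)
  case (P_At p ts)
  then show ?case by (cases p) (auto intro: OmegaP_OmegaN.intros)
next
  case (N_At p ts)
  then show ?case by (cases p) (auto intro: OmegaP_OmegaN.intros)
next
  case (N_AllP A)
  then have "\<not> occ (PV 0) (ty_pren (liftr fv) fs A)"
    by (auto simp: occ_ty_pren)
  with N_AllP show ?case by (auto intro: OmegaP_OmegaN.intros)
next
  case (P_Mu A ts)
  then have "occ (PS 0) (ty_pren fv (liftr fs) A)" "pos (PS 0) (ty_pren fv (liftr fs) A)"
    using pos_neg_ty_pren[of "PS 0" fv "liftr fs" A] by (auto simp: occ_ty_pren)
  with P_Mu show ?case by (auto intro: OmegaP_OmegaN.intros)
qed (auto intro: OmegaP_OmegaN.intros)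

lemma funpow_shP_eq_PS [simp]: "(shP ^^ a) Y = PS i \<longleftrightarrow> Y = PS i"
proof -
  have "shP Y = PS i \<longleftrightarrow> Y = PS i" for Y
    by (cases Y) auto
  then show ?thesis by (induction a) auto
qed

lemma funpow_shP_shS [simp]: "(shP ^^ a) (shS Y) = shS ((shP ^^ a) Y)"
proof -
  have "shP (shS Y) = shS (shP Y)" for Y
    by (cases Y) auto
  then show ?thesis by (induction a) auto
qed

lemma occ_psub_if_not_target:
  "occ Z T \<Longrightarrow> Z \<noteq> (shP ^^ a) ((shS ^^ b) X) \<Longrightarrow> occ Z (psub k a b X xs F T)"
  by (induction T arbitrary: k a b Z) auto

lemma occ_psub:
  "occ Z (psub k a b X xs F T) \<Longrightarrow> occ Z T \<or> occ Z (ty_pren (\<lambda>i. i + a) (\<lambda>i. i + b) F)"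
proof (induction T arbitrary: k a b Z)
  case (AllP A)
  then show ?case using occ_shP_ty_pren_Suc by fastforce
next
  case (Mu A ts)
  then show ?case using occ_shS_ty_pren_Suc by fastforce
qed (fastforce split: if_splits)+

lemma pos_neg_psub:
  assumes "\<not> occ Z (ty_pren (\<lambda>i. i + a) (\<lambda>i. i + b) F)"
  shows "(pos Z T \<longrightarrow> pos Z (psub k a b X xs F T)) \<and>
         (neg Z T \<longrightarrow> neg Z (psub k a b X xs F T))"
  using assms
  by (induction T arbitrary: k a b Z)
     (auto simp: occ_shP_ty_pren_Suc occ_shS_ty_pren_Suc dest: pos_neg_if_not_occ)

lemma OmegaP_OmegaN_psub:
  "OmegaP T \<Longrightarrow>
     OmegaP F \<and> pos ((shP ^^ a) ((shS ^^ b) X)) T \<or>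
     OmegaN F \<and> neg ((shP ^^ a) ((shS ^^ b) X)) T \<Longrightarrow>
     OmegaP (psub k a b X xs F T)"
  "OmegaN T \<Longrightarrow>
     OmegaN F \<and> pos ((shP ^^ a) ((shS ^^ b) X)) T \<or>
     OmegaP F \<and> neg ((shP ^^ a) ((shS ^^ b) X)) T \<Longrightarrow>
     OmegaN (psub k a b X xs F T)"
proof (induction arbitrary: k a b and k a b rule: OmegaP_OmegaN.inducts)
  case (P_At p ts)
  then show ?case
    by (auto intro: OmegaP_OmegaN.intros OmegaP_OmegaN_ty_tsubst OmegaP_OmegaN_ty_pren)
next
  case (N_At p ts)
  then show ?case
    by (auto intro: OmegaP_OmegaN.intros OmegaP_OmegaN_ty_tsubst OmegaP_OmegaN_ty_pren)
next
  case (N_AllP A)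
  have "\<not> occ (PV 0) (psub k (Suc a) b X xs F A)"
    using occ_psub[of "PV 0" k "Suc a" b X xs F A] N_AllP.hyps(2)
    by (auto simp: occ_ty_pren)
  with N_AllP show ?case by (auto intro: OmegaP_OmegaN.intros)
next
  case (P_Mu A ts)
  have "\<not> occ (PS 0) (ty_pren (\<lambda>i. i + a) (\<lambda>i. i + Suc b) F)"
    by (simp add: occ_ty_pren)
  then have "occ (PS 0) (psub (k + length ts) a (Suc b) X xs F A)"
      "pos (PS 0) (psub (k + length ts) a (Suc b) X xs F A)"
    using P_Mu.hyps(2,3) pos_neg_psub by (auto intro: occ_psub_if_not_target)
  with P_Mu show ?case by (auto intro: OmegaP_OmegaN.intros)
qed (auto intro: OmegaP_OmegaN.intros)

inductive_simps OmegaP_Imp_iff: "OmegaP (Imp A B)"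
inductive_simps OmegaN_Imp_iff: "OmegaN (Imp A B)"
inductive_simps OmegaP_AllI_iff: "OmegaP (AllI A)"
inductive_simps OmegaN_AllI_iff: "OmegaN (AllI A)"
inductive_simps OmegaP_AllP_iff: "OmegaP (AllP A)"
inductive_simps OmegaN_AllP_iff: "OmegaN (AllP A)"
inductive_simps OmegaP_Mu_iff: "OmegaP (Mu A ts)"
inductive_simps OmegaN_Mu_iff: "OmegaN (Mu A ts)"

lemmas OmegaP_OmegaN_iffs = OmegaP_Imp_iff OmegaN_Imp_iff OmegaP_AllI_iff OmegaN_AllI_iff
  OmegaP_AllP_iff OmegaN_AllP_iff OmegaP_Mu_iff OmegaN_Mu_iff

lemma OmegaP_OmegaN_of_psub:
  "is_type T \<Longrightarrow>
    (OmegaP (psub k a b X xs F T) \<longrightarrow> OmegaP T) \<and> (OmegaN (psub k a b X xs F T) \<longrightarrow> OmegaN T)"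
proof (induction T arbitrary: k a b)
  case (AllP A)
  have "occ (PV 0) (psub k (Suc a) b X xs F A)" if "occ (PV 0) A"
    using that by (rule occ_psub_if_not_target) simp
  with AllP show ?case by (auto simp: OmegaP_OmegaN_iffs)
qed (auto simp: OmegaP_OmegaN_iffs intro: OmegaP_OmegaN.intros)

theorem lemma5p1:
  fixes X :: prd and xs :: "nat list"
  shows
   "(\<forall>Tm Fm. OmegaN Tm \<longrightarrow> OmegaN Fm \<longrightarrow> pos X Tm \<longrightarrow> OmegaN (psubst X xs Fm Tm)) \<and>
    (\<forall>Tm Fp. OmegaN Tm \<longrightarrow> OmegaP Fp \<longrightarrow> neg X Tm \<longrightarrow> OmegaN (psubst X xs Fp Tm)) \<and>
    (\<forall>Tp Fp. OmegaP Tp \<longrightarrow> OmegaP Fp \<longrightarrow> pos X Tp \<longrightarrow> OmegaP (psubst X xs Fp Tp)) \<and>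
    (\<forall>Tp Fm. OmegaP Tp \<longrightarrow> OmegaN Fm \<longrightarrow> neg X Tp \<longrightarrow> OmegaP (psubst X xs Fm Tp)) \<and>
    (\<forall>T F. is_type T \<longrightarrow> is_type F \<longrightarrow>
        (OmegaP (psubst X xs F T) \<longrightarrow> OmegaP T) \<and>
        (OmegaN (psubst X xs F T) \<longrightarrow> OmegaN T))"
proof -
  have "OmegaP (psubst X xs F T)"
    if "OmegaP T" "OmegaP F \<and> pos X T \<or> OmegaN F \<and> neg X T" for T F
    using that OmegaP_OmegaN_psub(1)[where k=0 and a=0 and b=0 and X=X and xs=xs]
    by (simp add: psubst_def)
  moreover have "OmegaN (psubst X xs F T)"
    if "OmegaN T" "OmegaN F \<and> pos X T \<or> OmegaP F \<and> neg X T" for T F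
    using that OmegaP_OmegaN_psub(2)[where k=0 and a=0 and b=0 and X=X and xs=xs]
    by (simp add: psubst_def)
  moreover have
    "(OmegaP (psubst X xs F T) \<longrightarrow> OmegaP T) \<and> (OmegaN (psubst X xs F T) \<longrightarrow> OmegaN T)"
    if "is_type T" for T F
    using OmegaP_OmegaN_of_psub[OF that, where k=0 and a=0 and b=0] by (simp add: psubst_def)
  ultimately show ?thesis by blast
qed

end
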